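(* For all real numbers $w,z$ there exists an infinitely differentiable strictly increasing bijection $t:\mathbb{R}\to\mathbb{R}$ such that $t(w)=z$ and $t(x)\sim_F^* x$ for every $x<w$.
   Context: Let $h:\mathbb{R}\to\mathbb{R}$ be $h(x)=0$ for $x\le 0$ and $h(x)=e^{-1/x}$ for $x>0$, and let $s:[0,1]\to[0,1]$ be $s(x)=\frac{h(x)}{h(x)+h(1-x)}$. For points $A=(p_1,q_1)$, $B=(p_2,q_2)$ in $\mathbb{R}^2$ with $p_1<p_2$ and $q_1<q_2$, define $s_{AB}:[p_1,p_2]\to[q_1,q_2]$ by $s_{AB}(x)=(q_2-q_1)\, s\!\left(\frac{x-p_1}{p_2-p_1}\right)+q_1$. A rational pair is a point of $\mathbb{R}^2$ with both coordinates rational. Let $F=\{s_{AB}: A,B \text{ rational pairs}, A=(p_1,q_1), B=(p_2,q_2), p_1<p_2, q_1<q_2\}$. For $x,y\in\mathbb{R}$, write $x\sim_F y$ if there is $g\in F$ with $g(x)=y$ or $g^{-1}(x)=y$. Write $x\sim_F^* y$ if there is a finite sequence $x=x_1\sim_F x_2\sim_F\cdots\sim_F x_n=y$ with $n\ge 1$. *)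

theory Defs
  imports "HOL-Analysis.Analysis"
begin

definition hfun :: "real \<Rightarrow> real" where
  "hfun x = (if x \<le> 0 then 0 else exp (- 1 / x))"

definition sfun :: "real \<Rightarrow> real" where
  "sfun x = hfun x / (hfun x + hfun (1 - x))"

definition sAB :: "real \<times> real \<Rightarrow> real \<times> real \<Rightarrow> real \<Rightarrow> real" where
  "sAB A B x = (snd B - snd A) * sfun ((x - fst A) / (fst B - fst A)) + snd A"

definition rational_pair :: "real \<times> real \<Rightarrow> bool" where
  "rational_pair P \<longleftrightarrow> fst P \<in> \<rat> \<and> snd P \<in> \<rat>"

definition admissible :: "real \<times> real \<Rightarrow> real \<times> real \<Rightarrow> bool" where
  "admissible A B \<longleftrightarrow> rational_pair A \<and> rational_pair B \<and> fst A < fst B \<and> snd A < snd B"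

text \<open>x ~_F y: some g = s_AB in F (domain [p1,p2], range [q1,q2]) has g(x) = y or g^{-1}(x) = y.\<close>
definition simF :: "real \<Rightarrow> real \<Rightarrow> bool" where
  "simF x y \<longleftrightarrow> (\<exists>A B. admissible A B \<and>
      ((x \<in> {fst A..fst B} \<and> sAB A B x = y) \<or>
       (y \<in> {fst A..fst B} \<and> sAB A B y = x)))"

definition simF_star :: "real \<Rightarrow> real \<Rightarrow> bool" where
  "simF_star = simF\<^sup>*\<^sup>*"

definition smooth :: "(real \<Rightarrow> real) \<Rightarrow> bool" where
  "smooth t \<longleftrightarrow> (\<forall>n x. ((deriv ^^ n) t) differentiable (at x))"

end

theory Submission
  imports Defs "HOL-Computational_Algebra.Polynomial"
begin

text \<open>
  Choose rational knots \<open>(K n, V n)\<close>, \<open>n \<in> \<int>\<close>, increasing in both coordinates, tending to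
  \<open>(w, z)\<close> as \<open>n \<rightarrow> \<infinity>\<close> and to \<open>-\<infinity>\<close> in both coordinates as \<open>n \<rightarrow> -\<infinity>\<close>. On
  \<open>[K n, K (n + 1)]\<close> let \<open>t\<close> be \<open>s\<^sub>A\<^sub>B\<close> with \<open>A = (K n, V n)\<close> and \<open>B = (K (n + 1), V (n + 1))\<close>.
  Since \<open>s\<close> is constant near \<open>0\<close> and near \<open>1\<close>, these pieces fit together to a smooth increasing
  bijection from \<open>(-\<infinity>, w)\<close> onto \<open>(-\<infinity>, z)\<close>, and \<open>t x \<sim>\<^sub>F x\<close> there by construction. The point
  reflection \<open>t (2 w - x) = 2 z - t x\<close> extends \<open>t\<close> to all of \<open>\<real>\<close>. The \<open>k\<close>-th derivative of the
  \<open>n\<close>-th piece is bounded by a constant times \<open>(V (n + 1) - V n) / (K (n + 1) - K n)\<^sup>k\<close>; taking the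
  gaps of \<open>V\<close> small against every power of the gaps of \<open>K\<close> makes all derivatives tend to \<open>0\<close>
  at \<open>w\<close>, so \<open>t\<close> is smooth at \<open>w\<close> as well.
\<close>

section \<open>Smooth functions\<close>

lemma smooth_differentiable: "smooth f \<Longrightarrow> f differentiable (at x)"
  unfolding smooth_def by (metis funpow_0)

lemma smooth_deriv: "smooth f \<Longrightarrow> smooth (deriv f)"
  unfolding smooth_def by (metis funpow_Suc_right o_apply)

lemma smooth_DERIV: "smooth f \<Longrightarrow> DERIV f x :> deriv f x"
  using smooth_differentiable DERIV_deriv_iff_real_differentiable by blast

lemma smooth_field_differentiable: "smooth f \<Longrightarrow> f field_differentiable (at x)"
  using smooth_differentiable by (simp add: field_differentiable_def real_differentiable_def)

lemma smooth_higher_deriv: "smooth f \<Longrightarrow> smooth ((deriv ^^ k) f)"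
  by (induction k) (auto intro: smooth_deriv)

lemma smooth_continuous_on: "smooth f \<Longrightarrow> continuous_on S f"
  by (intro continuous_at_imp_continuous_on ballI differentiable_imp_continuous_within
      smooth_differentiable)

lemma smooth_coinduct:
  assumes "X f"
    and step: "\<And>g. X g \<Longrightarrow> (\<forall>x. g differentiable (at x)) \<and> X (deriv g)"
  shows "smooth f"
proof -
  have "X ((deriv ^^ n) f)" for n
    by (induction n) (auto simp: assms(1) dest: step)
  then show ?thesis
    unfolding smooth_def using step by blast
qed

lemma DERIV_scaled_affine:
  "DERIV f (a * x + b) :> f' \<Longrightarrow> DERIV (\<lambda>x. d * f (a * x + b)) x :> d * a * f'"
  by (auto intro!: derivative_eq_intros DERIV_chain2[of f] simp: mult_ac)

text \<open>A class of functions closed under \<open>deriv\<close>, hence consisting of smooth functions.\<close>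

inductive smooth_algebra :: "(real \<Rightarrow> real) \<Rightarrow> bool" where
  const: "smooth_algebra (\<lambda>x. c)"
| scaled_affine: "smooth f \<Longrightarrow> smooth_algebra (\<lambda>x. d * f (a * x + b))"
| inverse: "smooth f \<Longrightarrow> (\<And>x. f x \<noteq> 0) \<Longrightarrow> smooth_algebra (\<lambda>x. inverse (f x))"
| add: "smooth_algebra f \<Longrightarrow> smooth_algebra g \<Longrightarrow> smooth_algebra (\<lambda>x. f x + g x)"
| mult: "smooth_algebra f \<Longrightarrow> smooth_algebra g \<Longrightarrow> smooth_algebra (\<lambda>x. f x * g x)"

lemma smooth_algebra_smooth: "smooth f \<Longrightarrow> smooth_algebra f"
  using smooth_algebra.scaled_affine[of f 1 1 0] by simp

lemma smooth_algebra_deriv: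
  assumes "smooth_algebra f"
  shows "(\<forall>x. f field_differentiable (at x)) \<and> smooth_algebra (deriv f)"
  using assms
proof induction
  case (scaled_affine f d a b)
  have "DERIV (\<lambda>x. d * f (a * x + b)) x :> d * a * deriv f (a * x + b)" for x
    using DERIV_scaled_affine[OF smooth_DERIV[OF scaled_affine]] .
  then have "deriv (\<lambda>x. d * f (a * x + b)) = (\<lambda>x. d * a * deriv f (a * x + b))"
    and "(\<lambda>x. d * f (a * x + b)) field_differentiable (at x)" for x
    by (auto intro: DERIV_imp_deriv simp: field_differentiable_def)
  then show ?case
    using scaled_affine by (simp add: smooth_algebra.scaled_affine smooth_deriv)
next
  case (inverse f)
  have "deriv (\<lambda>x. inverse (f x)) = (\<lambda>x. (-1) * deriv f x * (inverse (f x) * inverse (f x)))"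
    using inverse by (intro ext) (simp add: smooth_field_differentiable field_simps power2_eq_square)
  moreover have "smooth_algebra (\<lambda>x. (-1) * deriv f x * (inverse (f x) * inverse (f x)))"
  proof -
    have f': "smooth_algebra (deriv f)"
      using inverse by (intro smooth_algebra_smooth smooth_deriv)
    have "smooth_algebra (\<lambda>x. inverse (f x))"
      using inverse by (rule smooth_algebra.inverse)
    then show ?thesis
      by (intro smooth_algebra.mult smooth_algebra.mult[OF smooth_algebra.const f'])
  qed
  moreover have "(\<lambda>x. inverse (f x)) field_differentiable (at x)" for x
    using inverse by (intro field_differentiable_inverse smooth_field_differentiable)
  ultimately show ?case
    by presburger
next
  case (add f g)
  have "deriv (\<lambda>x. f x + g x) = (\<lambda>x. deriv f x + deriv g x)"
    using add.IH by (intro ext deriv_add) auto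
  moreover have "smooth_algebra (\<lambda>x. deriv f x + deriv g x)"
    using add.IH by (intro smooth_algebra.add) auto
  moreover have "(\<lambda>x. f x + g x) field_differentiable (at x)" for x
    using add.IH by (intro field_differentiable_add) auto
  ultimately show ?case
    by presburger
next
  case (mult f g)
  have "deriv (\<lambda>x. f x * g x) = (\<lambda>x. f x * deriv g x + deriv f x * g x)"
    using mult.IH by (intro ext deriv_mult) auto
  moreover have "smooth_algebra (\<lambda>x. f x * deriv g x + deriv f x * g x)"
    using mult by (intro smooth_algebra.add smooth_algebra.mult) auto
  moreover have "(\<lambda>x. f x * g x) field_differentiable (at x)" for x
    using mult.IH by (intro field_differentiable_mult) auto
  ultimately show ?case
    by presburger
qed (simp add: smooth_algebra.const)

lemma smooth_algebra_imp_smooth: "smooth_algebra f \<Longrightarrow> smooth f"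
proof (rule smooth_coinduct[of smooth_algebra])
  fix g assume "smooth_algebra g"
  then show "(\<forall>x. g differentiable (at x)) \<and> smooth_algebra (deriv g)"
    using smooth_algebra_deriv[of g]
    by (simp add: field_differentiable_def real_differentiable_def)
qed

lemma smooth_const: "smooth (\<lambda>x. c)"
  by (intro smooth_algebra_imp_smooth smooth_algebra.const)

lemma smooth_add:
  assumes "smooth f" "smooth g"
  shows "smooth (\<lambda>x. f x + g x)"
  using smooth_algebra.add[OF assms[THEN smooth_algebra_smooth]] by (rule smooth_algebra_imp_smooth)

lemma smooth_scaled_affine:
  assumes "smooth f"
  shows "smooth (\<lambda>x. d * f (a * x + b))"
  using smooth_algebra.scaled_affine[OF assms] by (rule smooth_algebra_imp_smooth)

lemma smooth_divide:
  assumes "smooth f" "smooth g" "\<And>x. g x \<noteq> 0"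
  shows "smooth (\<lambda>x. f x / g x)"
  unfolding divide_inverse
  using smooth_algebra.mult[OF smooth_algebra_smooth smooth_algebra.inverse, OF assms]
  by (rule smooth_algebra_imp_smooth)

lemma higher_deriv_const: "(deriv ^^ Suc k) (\<lambda>x. c) = (\<lambda>x. 0)"
  by (induction k) auto

lemma higher_deriv_add:
  assumes "smooth f" "smooth g"
  shows "(deriv ^^ k) (\<lambda>x. f x + g x) = (\<lambda>x. (deriv ^^ k) f x + (deriv ^^ k) g x)"
proof (induction k)
  case (Suc k)
  have "deriv (\<lambda>x. (deriv ^^ k) f x + (deriv ^^ k) g x)
          = (\<lambda>x. deriv ((deriv ^^ k) f) x + deriv ((deriv ^^ k) g) x)"
    by (intro ext deriv_add smooth_field_differentiable smooth_higher_deriv assms)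
  with Suc.IH show ?case
    by simp
qed simp

lemma higher_deriv_scaled_affine:
  assumes "smooth f"
  shows "(deriv ^^ k) (\<lambda>x. d * f (a * x + b)) = (\<lambda>x. d * a ^ k * (deriv ^^ k) f (a * x + b))"
proof (induction k)
  case (Suc k)
  have "DERIV (\<lambda>x. d * a ^ k * (deriv ^^ k) f (a * x + b)) x
          :> d * a ^ Suc k * (deriv ^^ Suc k) f (a * x + b)" for x
  proof -
    have "DERIV ((deriv ^^ k) f) (a * x + b) :> (deriv ^^ Suc k) f (a * x + b)"
      using smooth_DERIV[OF smooth_higher_deriv[OF assms]] by simp
    from DERIV_scaled_affine[OF this, of "d * a ^ k"] show ?thesis
      by (simp add: mult_ac)
  qed
  then have "deriv (\<lambda>x. d * a ^ k * (deriv ^^ k) f (a * x + b))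
               = (\<lambda>x. d * a ^ Suc k * (deriv ^^ Suc k) f (a * x + b))"
    by (intro ext DERIV_imp_deriv)
  then show ?case
    using Suc.IH by simp
qed simp

section \<open>The functions \<open>h\<close> and \<open>s\<close>\<close>

definition hpoly :: "real poly \<Rightarrow> real \<Rightarrow> real" where
  "hpoly p x = (if x \<le> 0 then 0 else poly p (1 / x) * exp (- 1 / x))"

text \<open>\<open>(p (1/x) e\<^sup>-\<^sup>1\<^sup>/\<^sup>x)' = (p (1/x) - p' (1/x)) x\<^sup>-\<^sup>2 e\<^sup>-\<^sup>1\<^sup>/\<^sup>x\<close> for \<open>x > 0\<close>.\<close>

definition hpoly_deriv :: "real poly \<Rightarrow> real poly" where
  "hpoly_deriv p = pCons 0 (pCons 0 (p - pderiv p))"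

lemma poly_times_exp_minus_tendsto_0:
  fixes p :: "real poly"
  shows "((\<lambda>u. poly p u * exp (- u)) \<longlongrightarrow> 0) at_top"
proof -
  have "((\<lambda>u. \<Sum>i\<le>degree p. coeff p i * (u ^ i / exp u)) \<longlongrightarrow> (\<Sum>i\<le>degree p. coeff p i * 0)) at_top"
    by (intro tendsto_sum tendsto_mult tendsto_const tendsto_power_div_exp_0)
  then show ?thesis
    by (simp add: poly_altdef sum_distrib_right exp_minus divide_inverse mult.assoc)
qed

lemma hpoly_DERIV_pos:
  assumes "x > 0"
  shows "DERIV (hpoly p) x :> hpoly (hpoly_deriv p) x"
proof -
  have d1: "DERIV (\<lambda>x. poly p (1 / x)) x :> poly (pderiv p) (1 / x) * (- inverse (x ^ 2))"
    by (rule DERIV_chain2[OF poly_DERIV])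
       (use assms in \<open>auto intro!: derivative_eq_intros simp: power2_eq_square field_simps\<close>)
  have d2: "DERIV (\<lambda>x. exp (- 1 / x)) x :> exp (- 1 / x) * inverse (x ^ 2)"
    by (rule DERIV_chain2[of exp])
       (use assms in \<open>auto intro!: derivative_eq_intros simp: power2_eq_square field_simps\<close>)
  have "poly (pderiv p) (1 / x) * (- inverse (x ^ 2)) * exp (- 1 / x)
          + exp (- 1 / x) * inverse (x ^ 2) * poly p (1 / x) = hpoly (hpoly_deriv p) x"
    using assms by (simp add: hpoly_def hpoly_deriv_def power2_eq_square field_simps)
  then have "DERIV (\<lambda>x. poly p (1 / x) * exp (- 1 / x)) x :> hpoly (hpoly_deriv p) x"
    using DERIV_mult[OF d1 d2] by simp
  then show ?thesis
    by (rule has_field_derivative_transform_within_open[of _ _ _ "{0<..}"])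
       (use assms in \<open>auto simp: hpoly_def\<close>)
qed

lemma hpoly_DERIV_neg: "x < 0 \<Longrightarrow> DERIV (hpoly p) x :> hpoly (hpoly_deriv p) x"
  by (rule has_field_derivative_transform_within_open[of "\<lambda>_. 0" _ _ "{..<0}"])
     (auto simp: hpoly_def)

lemma hpoly_DERIV_0: "DERIV (hpoly p) 0 :> hpoly (hpoly_deriv p) 0"
proof -
  have "((\<lambda>y. (hpoly p y - hpoly p 0) / (y - 0)) \<longlongrightarrow> 0) (at 0)"
  proof (rule filterlim_split_at)
    have "\<forall>\<^sub>F y in at_left 0. (hpoly p y - hpoly p 0) / (y - 0) = 0"
      using eventually_at_left_real[of "-1" "0::real"] by (simp add: eventually_mono hpoly_def)
    then show "((\<lambda>y. (hpoly p y - hpoly p 0) / (y - 0)) \<longlongrightarrow> 0) (at_left 0)"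
      by (rule tendsto_eventually)
  next
    have "((\<lambda>y. poly (pCons 0 p) (inverse y) * exp (- inverse y)) \<longlongrightarrow> 0) (at_right 0)"
      by (rule filterlim_compose[OF poly_times_exp_minus_tendsto_0 filterlim_inverse_at_top_right])
    moreover have "\<forall>\<^sub>F y in at_right 0.
        poly (pCons 0 p) (inverse y) * exp (- inverse y) = (hpoly p y - hpoly p 0) / (y - 0)"
      using eventually_at_right_real[of "0::real" 1]
      by (auto elim!: eventually_mono simp: hpoly_def field_simps)
    ultimately show "((\<lambda>y. (hpoly p y - hpoly p 0) / (y - 0)) \<longlongrightarrow> 0) (at_right 0)"
      by (rule Lim_transform_eventually)
  qed
  then show ?thesis
    by (simp add: has_field_derivative_iff hpoly_def)
qed

lemma hpoly_DERIV: "DERIV (hpoly p) x :> hpoly (hpoly_deriv p) x"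
  using hpoly_DERIV_pos hpoly_DERIV_neg hpoly_DERIV_0 by (cases x "0::real" rule: linorder_cases) auto

lemma smooth_hpoly: "smooth (hpoly p)"
proof (rule smooth_coinduct[of "\<lambda>g. \<exists>p. g = hpoly p"])
  fix g assume "\<exists>p. g = hpoly p"
  then obtain p where g: "g = hpoly p" by blast
  have "deriv g = hpoly (hpoly_deriv p)"
    unfolding g by (intro ext DERIV_imp_deriv hpoly_DERIV)
  then show "(\<forall>x. g differentiable (at x)) \<and> (\<exists>p. deriv g = hpoly p)"
    unfolding g using hpoly_DERIV real_differentiable_def by blast
qed auto

lemma hfun_eq_hpoly: "hfun = hpoly 1"
  by (simp add: fun_eq_iff hfun_def hpoly_def)

lemma smooth_hfun: "smooth hfun"
  unfolding hfun_eq_hpoly by (rule smooth_hpoly)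

lemma hfun_nonneg: "0 \<le> hfun x"
  by (simp add: hfun_def)

lemma hfun_pos: "0 < x \<Longrightarrow> 0 < hfun x"
  by (simp add: hfun_def)

lemma hfun_nonpos_eq_0: "x \<le> 0 \<Longrightarrow> hfun x = 0"
  by (simp add: hfun_def)

lemma hfun_strict_mono: "0 < x \<Longrightarrow> x < y \<Longrightarrow> hfun x < hfun y"
  by (auto simp: hfun_def field_simps)

lemma sfun_denominator_pos: "0 < hfun x + hfun (1 - x)"
  using hfun_pos[of x] hfun_pos[of "1 - x"] hfun_nonneg[of x] hfun_nonneg[of "1 - x"]
  by (cases "x > 0") auto

lemma smooth_sfun: "smooth sfun"
proof -
  have "smooth (\<lambda>x. hfun x / (hfun x + 1 * hfun ((-1) * x + 1)))"
    using sfun_denominator_pos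
    by (intro smooth_divide smooth_hfun smooth_add smooth_scaled_affine)
       (simp_all add: less_imp_neq[symmetric])
  then show ?thesis
    by (simp add: sfun_def[abs_def])
qed

lemma sfun_nonpos_eq_0: "x \<le> 0 \<Longrightarrow> sfun x = 0"
  by (simp add: sfun_def hfun_nonpos_eq_0)

lemma sfun_ge_1_eq_1: "1 \<le> x \<Longrightarrow> sfun x = 1"
  using hfun_pos[of x] by (simp add: sfun_def hfun_nonpos_eq_0)

lemma sfun_nonneg: "0 \<le> sfun x"
  using sfun_denominator_pos[of x] hfun_nonneg[of x] by (simp add: sfun_def)

lemma sfun_strict_mono:
  assumes "u < v" "u < 1" "0 < v"
  shows "sfun u < sfun v"
proof -
  have "hfun u * hfun (1 - v) < hfun v * hfun (1 - u)"
  proof (cases "0 < u \<and> v < 1")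
    case True
    then show ?thesis
      using assms hfun_pos hfun_nonneg by (intro mult_strict_mono hfun_strict_mono) auto
  next
    case False
    then have "hfun u * hfun (1 - v) = 0"
      by (auto simp: hfun_nonpos_eq_0)
    moreover have "0 < hfun v * hfun (1 - u)"
      using assms by (intro mult_pos_pos hfun_pos) auto
    ultimately show ?thesis
      by linarith
  qed
  then show ?thesis
    using sfun_denominator_pos[of u] sfun_denominator_pos[of v]
    by (simp add: sfun_def divide_less_eq field_simps)
qed

lemma higher_deriv_sfun_outside:
  assumes "y < 0 \<or> 1 < y"
  shows "(deriv ^^ Suc k) sfun y = 0"
proof -
  obtain c where "\<forall>\<^sub>F x in nhds y. sfun x = c"
  proof (cases "y < 0")
    case True
    then show ?thesis
      using eventually_nhds_in_open[of "{..<0}" y]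
      by (intro that[of 0]) (auto elim!: eventually_mono intro: sfun_nonpos_eq_0)
  next
    case False
    then show ?thesis
      using assms eventually_nhds_in_open[of "{1<..}" y]
      by (intro that[of 1]) (auto elim!: eventually_mono intro: sfun_ge_1_eq_1)
  qed
  then have "(deriv ^^ Suc k) sfun y = (deriv ^^ Suc k) (\<lambda>_. c) y"
    by (rule higher_deriv_cong_ev) simp
  then show ?thesis
    by (simp only: higher_deriv_const)
qed

lemma higher_deriv_sfun_bounded: "\<exists>M\<ge>0. \<forall>y. \<bar>(deriv ^^ Suc k) sfun y\<bar> \<le> M"
proof -
  let ?f = "(deriv ^^ Suc k) sfun"
  have "continuous_on {0..1} ?f"
    by (intro smooth_continuous_on smooth_higher_deriv smooth_sfun)
  then have "bounded (?f ` {0..1})"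
    by (intro compact_imp_bounded compact_continuous_image) auto
  then obtain M where M: "\<forall>y\<in>{0..1}. \<bar>?f y\<bar> \<le> M"
    unfolding bounded_real by auto
  have "\<bar>?f y\<bar> \<le> max M 0" for y
  proof (cases "0 \<le> y \<and> y \<le> 1")
    case True
    then have "\<bar>?f y\<bar> \<le> M"
      using M by simp
    then show ?thesis
      by simp
  next
    case False
    then have "y < 0 \<or> 1 < y"
      by auto
    then show ?thesis
      using higher_deriv_sfun_outside[of y k] by simp
  qed
  then show ?thesis
    by (intro exI[of _ "max M 0"]) auto
qed

section \<open>Smoothness from flatness at a point\<close>

lemma DERIV_0_if_deriv_tendsto_0:
  fixes h :: "real \<Rightarrow> real"
  assumes cont: "isCont h w"
    and diff: "\<And>x. x \<noteq> w \<Longrightarrow> h differentiable (at x)"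
    and lim: "(deriv h \<longlongrightarrow> 0) (at w)"
  shows "DERIV h w :> 0"
proof -
  have "((\<lambda>y. (h y - h w) / (y - w)) \<longlongrightarrow> 0) (at w)"
  proof (rule lhopital[where f' = "deriv h" and g' = "\<lambda>_. 1"])
    show "((\<lambda>y. h y - h w) \<longlongrightarrow> 0) (at w)"
      using cont by (simp add: isCont_def LIM_zero)
    show "((\<lambda>y. y - w) \<longlongrightarrow> 0) (at w)"
      by (simp add: LIM_zero)
    show "\<forall>\<^sub>F y in at w. y - w \<noteq> 0" "\<forall>\<^sub>F y in at w. (1::real) \<noteq> 0"
      by (simp_all add: eventually_at_filter)
    have "DERIV (\<lambda>y. h y - h w) y :> deriv h y" if "y \<noteq> w" for y
      using DERIV_diff[OF diff[OF that, folded DERIV_deriv_iff_real_differentiable] DERIV_const]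
      by simp
    then show "\<forall>\<^sub>F y in at w. DERIV (\<lambda>y. h y - h w) y :> deriv h y"
      unfolding eventually_at_filter by (intro always_eventually) auto
    show "\<forall>\<^sub>F y in at w. DERIV (\<lambda>y. y - w) y :> 1"
      by (auto intro!: derivative_eq_intros always_eventually)
    show "((\<lambda>y. deriv h y / 1) \<longlongrightarrow> 0) (at w)"
      using lim by simp
  qed
  then show ?thesis
    by (simp add: has_field_derivative_iff)
qed

lemma smooth_if_flat_at:
  fixes g :: "real \<Rightarrow> real"
  assumes diff: "\<And>k x. x \<noteq> w \<Longrightarrow> (deriv ^^ k) g differentiable (at x)"
    and cont: "isCont g w"
    and flat: "\<And>k. ((deriv ^^ Suc k) g \<longlongrightarrow> 0) (at w)"
  shows "smooth g"
proof -
  have "isCont ((deriv ^^ k) g) w \<and> DERIV ((deriv ^^ k) g) w :> 0" for k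
  proof (induction k)
    case 0
    then show ?case
      using DERIV_0_if_deriv_tendsto_0[OF cont] diff[of _ 0] flat[of 0] cont by simp
  next
    case (Suc k)
    then have "(deriv ^^ Suc k) g w = 0"
      using DERIV_imp_deriv by fastforce
    then have "isCont ((deriv ^^ Suc k) g) w"
      using flat[of k] by (simp add: isCont_def)
    then show ?case
      using DERIV_0_if_deriv_tendsto_0 diff[of _ "Suc k"] flat[of "Suc k"] by simp
  qed
  then show ?thesis
    unfolding smooth_def using diff real_differentiable_def by metis
qed

lemma higher_deriv_local_smooth_model:
  assumes "open U" "x \<in> U" "\<And>y. y \<in> U \<Longrightarrow> f y = g y" "smooth g"
  shows "(deriv ^^ k) f differentiable (at x)" "(deriv ^^ k) f x = (deriv ^^ k) g x"
proof -
  have eq: "(deriv ^^ k) f y = (deriv ^^ k) g y" if "y \<in> U" for y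
    using eventually_nhds_in_open[OF assms(1) that] assms(3)
    by (intro higher_deriv_cong_ev) (auto elim!: eventually_mono)
  show "(deriv ^^ k) f x = (deriv ^^ k) g x"
    using eq assms(2) .
  have "DERIV ((deriv ^^ k) g) x :> deriv ((deriv ^^ k) g) x"
    by (intro smooth_DERIV smooth_higher_deriv assms(4))
  then have "DERIV ((deriv ^^ k) f) x :> deriv ((deriv ^^ k) g) x"
    using assms(1,2) eq[symmetric] by (rule has_field_derivative_transform_within_open)
  then show "(deriv ^^ k) f differentiable (at x)"
    using real_differentiable_def by blast
qed

section \<open>Gluing the functions \<open>s\<^sub>A\<^sub>B\<close> along rational knots\<close>

lemma strict_mono_int_step:
  fixes f :: "int \<Rightarrow> 'a::order"
  assumes step: "\<And>n. f n < f (n + 1)"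
  shows "strict_mono f"
proof (rule strict_monoI)
  fix m n :: int
  assume "m < n"
  then show "f m < f n"
  proof (induction n rule: int_gr_induct)
    case base
    then show ?case using step .
  next
    case (step i)
    then show ?case using assms[of i] by (blast intro: less_trans)
  qed
qed

locale rational_knots =
  fixes K V :: "int \<Rightarrow> real" and w z :: real
  assumes K_step: "\<And>n. K n < K (n + 1)" and V_step: "\<And>n. V n < V (n + 1)"
    and K_below: "\<And>n. K n < w" and V_below: "\<And>n. V n < z"
    and K_rational: "\<And>n. K n \<in> \<rat>" and V_rational: "\<And>n. V n \<in> \<rat>"
    and K_unbounded: "\<And>c. \<exists>n. K n < c" and V_unbounded: "\<And>c. \<exists>n. V n < c"
    and K_approx: "\<And>e. 0 < e \<Longrightarrow> \<exists>n. w - K n < e"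
    and V_approx: "\<And>e. 0 < e \<Longrightarrow> \<exists>n. z - V n < e"
    and flat: "\<And>k e. 0 < e \<Longrightarrow> \<exists>N. \<forall>n\<ge>N. (V (n + 1) - V n) / (K (n + 1) - K n) ^ Suc k < e"
begin

lemma K_strict_mono: "strict_mono K"
  using K_step by (rule strict_mono_int_step)

lemma V_strict_mono: "strict_mono V"
  using V_step by (rule strict_mono_int_step)

lemma K_less_iff [simp]: "K m < K n \<longleftrightarrow> m < n"
  using K_strict_mono by (rule strict_mono_less)

lemma K_le_iff [simp]: "K m \<le> K n \<longleftrightarrow> m \<le> n"
  using K_strict_mono by (rule strict_mono_less_eq)

lemma V_le_iff [simp]: "V m \<le> V n \<longleftrightarrow> m \<le> n"
  using V_strict_mono by (rule strict_mono_less_eq)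

definition knot_index :: "real \<Rightarrow> int" where
  "knot_index x = (THE n. K n \<le> x \<and> x < K (n + 1))"

lemma knot_interval_exists:
  assumes "x < w"
  shows "\<exists>n. K n \<le> x \<and> x < K (n + 1)"
proof (rule ccontr)
  assume none: "\<nexists>n. K n \<le> x \<and> x < K (n + 1)"
  obtain n0 where n0: "K n0 \<le> x"
    using K_unbounded[of x] by (auto intro: less_imp_le)
  obtain N where N: "x < K N"
    using K_approx[of "w - x"] assms by auto
  have "K n \<le> x" if "n0 \<le> n" for n
    using that
  proof (induction n rule: int_ge_induct)
    case (step i)
    then show ?case using none by (meson not_le)
  qed (rule n0)
  with N have "\<not> n0 \<le> N"
    by fastforce
  then have "K N < K n0"
    by simp
  with n0 N show False
    by linarith
qed

lemma knot_index_eqI: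
  assumes "K n \<le> x" "x < K (n + 1)"
  shows "knot_index x = n"
  unfolding knot_index_def
proof (rule the_equality)
  fix m
  assume m: "K m \<le> x \<and> x < K (m + 1)"
  with assms have "K m < K (n + 1)" "K n < K (m + 1)"
    by linarith+
  then show "m = n"
    by simp
qed (use assms in simp)

lemma knot_index:
  assumes "x < w"
  shows "K (knot_index x) \<le> x" "x < K (knot_index x + 1)"
  using knot_interval_exists[OF assms] knot_index_eqI by auto

lemma knot_index_ge:
  assumes "K N < x" "x < w"
  shows "N \<le> knot_index x"
proof -
  have "K N < K (knot_index x + 1)"
    using knot_index[OF assms(2)] assms(1) by linarith
  then show ?thesis
    by simp
qed

definition piece :: "int \<Rightarrow> real \<Rightarrow> real" where
  "piece n = sAB (K n, V n) (K (n + 1), V (n + 1))"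

lemma piece_eq: "piece n y = (V (n + 1) - V n) * sfun ((y - K n) / (K (n + 1) - K n)) + V n"
  by (simp add: piece_def sAB_def)

lemma piece_left: "y \<le> K n \<Longrightarrow> piece n y = V n"
  using K_step[of n] by (simp add: piece_eq sfun_nonpos_eq_0 divide_nonpos_pos)

lemma piece_right: "K (n + 1) \<le> y \<Longrightarrow> piece n y = V (n + 1)"
  using K_step[of n] by (simp add: piece_eq sfun_ge_1_eq_1)

lemma piece_ge: "V n \<le> piece n y"
  using V_step[of n] sfun_nonneg by (simp add: piece_eq)

lemma piece_strict_mono:
  assumes "K n \<le> x" "x < y" "K n < y" "x < K (n + 1)"
  shows "piece n x < piece n y"
proof -
  have "sfun ((x - K n) / (K (n + 1) - K n)) < sfun ((y - K n) / (K (n + 1) - K n))"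
    using assms K_step[of n]
    by (intro sfun_strict_mono) (simp_all add: divide_strict_right_mono divide_less_eq)
  then show ?thesis
    using V_step[of n] by (simp add: piece_eq)
qed

lemma piece_less:
  assumes "y < K (n + 1)"
  shows "piece n y < V (n + 1)"
proof (cases "y \<le> K n")
  case True
  then show ?thesis
    using V_step[of n] by (simp add: piece_left)
next
  case False
  then have "piece n y < piece n (K (n + 1))"
    using assms by (intro piece_strict_mono) auto
  then show ?thesis
    by (simp add: piece_right)
qed

definition left_map :: "real \<Rightarrow> real" where
  "left_map x = piece (knot_index x) x"

lemma left_map_eq_piece:
  assumes "x < w" "K n \<le> x" "x \<le> K (n + 1)"
  shows "left_map x = piece n x"
proof (cases "x = K (n + 1)")
  case True
  then have "knot_index x = n + 1"
    using K_step[of "n + 1"] by (intro knot_index_eqI) auto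
  with True show ?thesis
    by (simp add: left_map_def piece_left piece_right)
next
  case False
  with assms have "knot_index x = n"
    by (intro knot_index_eqI) auto
  then show ?thesis
    by (simp add: left_map_def)
qed

lemma left_map_bounds:
  assumes "x < w"
  shows "V (knot_index x) \<le> left_map x" "left_map x < V (knot_index x + 1)"
  using piece_ge piece_less knot_index[OF assms] by (simp_all add: left_map_def)

lemma left_map_below: "x < w \<Longrightarrow> left_map x < z"
  using left_map_bounds(2) V_below less_trans by blast

lemma left_map_strict_mono:
  assumes "x < y" "y < w"
  shows "left_map x < left_map y"
proof -
  let ?m = "knot_index x" and ?n = "knot_index y"
  have x: "K ?m \<le> x" "x < K (?m + 1)" and y: "K ?n \<le> y" "y < K (?n + 1)"
    using knot_index assms by fastforce+
  then have "K ?m < K (?n + 1)"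
    using assms(1) by linarith
  then consider "?m = ?n" | "?m + 1 \<le> ?n"
    by fastforce
  then show ?thesis
  proof cases
    case 1
    then show ?thesis
      using x y assms(1) piece_strict_mono[of ?m x y] by (simp add: left_map_def)
  next
    case 2
    then have "left_map x < V ?n"
      using left_map_bounds(2)[of x] assms V_le_iff[of "?m + 1" ?n] by linarith
    also have "\<dots> \<le> left_map y"
      using left_map_bounds(1) assms(2) .
    finally show ?thesis .
  qed
qed

lemma left_map_simF: "x < w \<Longrightarrow> simF (left_map x) x"
  using knot_index[of x] K_step K_rational V_step V_rational
  unfolding simF_def admissible_def rational_pair_def left_map_def piece_def
  by (intro exI[of _ "(K (knot_index x), V (knot_index x))"]
      exI[of _ "(K (knot_index x + 1), V (knot_index x + 1))"]) auto

definition gap_ratio :: "nat \<Rightarrow> int \<Rightarrow> real" where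
  "gap_ratio k n = (V (n + 1) - V n) / (K (n + 1) - K n) ^ Suc k"

lemma gap_ratio_nonneg: "0 \<le> gap_ratio k n"
  using K_step[of n] V_step[of n] by (simp add: gap_ratio_def)

lemma piece_scaled_affine:
  "piece n = (\<lambda>y. (V (n + 1) - V n) * sfun (inverse (K (n + 1) - K n) * y + - K n / (K (n + 1) - K n))
                  + V n)"
  by (simp add: fun_eq_iff piece_eq divide_inverse left_diff_distrib mult.commute)

lemma smooth_piece: "smooth (piece n)"
  unfolding piece_scaled_affine by (intro smooth_add smooth_scaled_affine smooth_sfun smooth_const)

lemma higher_deriv_piece:
  "(deriv ^^ Suc k) (piece n) y
     = gap_ratio k n * (deriv ^^ Suc k) sfun (inverse (K (n + 1) - K n) * y + - K n / (K (n + 1) - K n))"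
  unfolding piece_scaled_affine
  by (simp only: higher_deriv_add[OF smooth_scaled_affine[OF smooth_sfun] smooth_const]
      higher_deriv_scaled_affine[OF smooth_sfun] higher_deriv_const)
     (simp add: gap_ratio_def power_inverse divide_inverse)

definition local_model :: "int \<Rightarrow> real \<Rightarrow> real" where
  "local_model n y = piece (n - 1) y + piece n y + - V n"

lemma smooth_local_model: "smooth (local_model n)"
  unfolding local_model_def[abs_def] by (intro smooth_add smooth_piece smooth_const)

lemma higher_deriv_local_model:
  "(deriv ^^ Suc k) (local_model n) y = (deriv ^^ Suc k) (piece (n - 1)) y + (deriv ^^ Suc k) (piece n) y"
  unfolding local_model_def[abs_def]
  by (simp only: higher_deriv_add smooth_add smooth_piece smooth_const higher_deriv_const add_0_right)

lemma higher_deriv_local_model_bound: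
  "\<exists>M\<ge>0. \<forall>n y. \<bar>(deriv ^^ Suc k) (local_model n) y\<bar> \<le> M * (gap_ratio k (n - 1) + gap_ratio k n)"
proof -
  obtain M where M: "M \<ge> 0" "\<And>y. \<bar>(deriv ^^ Suc k) sfun y\<bar> \<le> M"
    using higher_deriv_sfun_bounded[of k] by blast
  have piece: "\<bar>(deriv ^^ Suc k) (piece n) y\<bar> \<le> M * gap_ratio k n" for n y
    unfolding higher_deriv_piece abs_mult abs_of_nonneg[OF gap_ratio_nonneg]
    using mult_left_mono[OF M(2) gap_ratio_nonneg] by (simp add: mult.commute)
  have "\<bar>(deriv ^^ Suc k) (local_model n) y\<bar> \<le> M * (gap_ratio k (n - 1) + gap_ratio k n)" for n y
  proof -
    have "\<bar>(deriv ^^ Suc k) (local_model n) y\<bar>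
            \<le> \<bar>(deriv ^^ Suc k) (piece (n - 1)) y\<bar> + \<bar>(deriv ^^ Suc k) (piece n) y\<bar>"
      unfolding higher_deriv_local_model by (rule abs_triangle_ineq)
    also have "\<dots> \<le> M * (gap_ratio k (n - 1) + gap_ratio k n)"
      using add_mono[OF piece piece] by (simp add: distrib_left)
    finally show ?thesis .
  qed
  with M(1) show ?thesis
    by blast
qed

text \<open>Each piece is constant outside its own interval, so on \<open>(K (n - 1), K (n + 1))\<close> the left map is,
  up to a constant, the sum of the two pieces meeting at \<open>K n\<close>.\<close>

lemma left_map_eq_local_model:
  assumes "x < w" "K (n - 1) < x" "x < K (n + 1)"
  shows "left_map x = local_model n x"
proof (cases "x \<le> K n")
  case True
  then show ?thesis
    using assms left_map_eq_piece[of x "n - 1"] by (simp add: local_model_def piece_left)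
next
  case False
  then show ?thesis
    using assms left_map_eq_piece[of x n] piece_right[of "n - 1" x] by (simp add: local_model_def)
qed

definition glued :: "real \<Rightarrow> real" where
  "glued x = (if x < w then left_map x else if x = w then z else 2 * z - left_map (2 * w - x))"

lemma glued_w: "glued w = z"
  by (simp add: glued_def)

lemma glued_simF_star: "x < w \<Longrightarrow> simF_star (glued x) x"
  using left_map_simF by (simp add: glued_def simF_star_def r_into_rtranclp)

lemma glued_strict_mono: "strict_mono glued"
proof (rule strict_monoI)
  fix x y :: real
  assume "x < y"
  then consider "y < w" | "x < w" "w \<le> y" | "w \<le> x"
    by linarith
  then show "glued x < glued y"
  proof cases
    case 1
    moreover have "x < w"
      using \<open>x < y\<close> 1 by linarith
    ultimately show ?thesis
      using left_map_strict_mono[OF \<open>x < y\<close>] by (simp add: glued_def)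
  next
    case 2
    then show ?thesis
      using left_map_below[of x] left_map_below[of "2 * w - y"] by (auto simp: glued_def)
  next
    case 3
    then show ?thesis
      using \<open>x < y\<close> left_map_strict_mono[of "2 * w - y" "2 * w - x"] left_map_below[of "2 * w - y"]
      by (auto simp: glued_def)
  qed
qed

lemma abs_glued_diff_z: "y \<noteq> w \<Longrightarrow> \<bar>glued y - z\<bar> = z - left_map (w - \<bar>y - w\<bar>)"
  using left_map_below[of y] left_map_below[of "2 * w - y"]
  by (cases "y < w") (auto simp: glued_def abs_if)

lemma glued_left_model:
  assumes "x < w"
  shows "(deriv ^^ k) glued differentiable (at x)"
    and "(deriv ^^ k) glued x = (deriv ^^ k) (local_model (knot_index x)) x"
proof -
  let ?n = "knot_index x"
  have "K (?n - 1) < K ?n"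
    by simp
  then have "x \<in> {K (?n - 1)<..<K (?n + 1)}"
    unfolding greaterThanLessThan_iff using knot_index[OF assms] by linarith
  moreover have "glued y = local_model ?n y" if "y \<in> {K (?n - 1)<..<K (?n + 1)}" for y
    using that K_below[of "?n + 1"] left_map_eq_local_model[of y ?n] by (simp add: glued_def)
  ultimately have U: "open {K (?n - 1)<..<K (?n + 1)}" "x \<in> {K (?n - 1)<..<K (?n + 1)}"
    "\<And>y. y \<in> {K (?n - 1)<..<K (?n + 1)} \<Longrightarrow> glued y = local_model ?n y" "smooth (local_model ?n)"
    by (simp_all add: smooth_local_model)
  show "(deriv ^^ k) glued differentiable (at x)"
    by (rule higher_deriv_local_smooth_model(1)[OF U])
  show "(deriv ^^ k) glued x = (deriv ^^ k) (local_model ?n) x"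
    by (rule higher_deriv_local_smooth_model(2)[OF U])
qed

lemma glued_right_model:
  assumes "w < x"
  shows "(deriv ^^ k) glued differentiable (at x)"
    and "(deriv ^^ k) glued x
           = (deriv ^^ k) (\<lambda>y. 2 * z + (-1) * local_model (knot_index (2 * w - x)) ((-1) * y + 2 * w)) x"
proof -
  let ?n = "knot_index (2 * w - x)"
  let ?U = "{2 * w - K (?n + 1)<..<2 * w - K (?n - 1)}"
  have "K (?n - 1) < K ?n"
    by simp
  then have "x \<in> ?U"
    unfolding greaterThanLessThan_iff using knot_index[of "2 * w - x"] assms by linarith
  moreover have "glued y = 2 * z + (-1) * local_model ?n ((-1) * y + 2 * w)" if "y \<in> ?U" for y
    using that K_below[of "?n + 1"] left_map_eq_local_model[of "2 * w - y" ?n]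
    by (simp add: glued_def)
  moreover have "smooth (\<lambda>y. 2 * z + (-1) * local_model ?n ((-1) * y + 2 * w))"
    by (intro smooth_add smooth_const smooth_scaled_affine smooth_local_model)
  ultimately have U: "open ?U" "x \<in> ?U"
    "\<And>y. y \<in> ?U \<Longrightarrow> glued y = 2 * z + (-1) * local_model ?n ((-1) * y + 2 * w)"
    "smooth (\<lambda>y. 2 * z + (-1) * local_model ?n ((-1) * y + 2 * w))"
    by simp_all
  show "(deriv ^^ k) glued differentiable (at x)"
    by (rule higher_deriv_local_smooth_model(1)[OF U])
  show "(deriv ^^ k) glued x
          = (deriv ^^ k) (\<lambda>y. 2 * z + (-1) * local_model ?n ((-1) * y + 2 * w)) x"
    by (rule higher_deriv_local_smooth_model(2)[OF U])
qed

lemma glued_higher_deriv_differentiable: "x \<noteq> w \<Longrightarrow> (deriv ^^ k) glued differentiable (at x)"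
  using glued_left_model(1) glued_right_model(1) by (cases "x < w") auto

lemma abs_higher_deriv_glued:
  assumes "y \<noteq> w"
  shows "\<bar>(deriv ^^ Suc k) glued y\<bar>
           = \<bar>(deriv ^^ Suc k) (local_model (knot_index (w - \<bar>y - w\<bar>))) (w - \<bar>y - w\<bar>)\<bar>"
proof (cases "y < w")
  case True
  then have "w - \<bar>y - w\<bar> = y"
    by simp
  then show ?thesis
    using glued_left_model(2)[OF True, of "Suc k"] by (simp only:)
next
  case False
  with assms have "w < y" "w - \<bar>y - w\<bar> = 2 * w - y"
    by auto
  then show ?thesis
    using glued_right_model(2)[of y "Suc k"]
    by (simp only: higher_deriv_add[OF smooth_const smooth_scaled_affine[OF smooth_local_model]]
        higher_deriv_scaled_affine[OF smooth_local_model] higher_deriv_const)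
       (simp add: abs_mult)
qed

lemma gap_ratio_eventually_less: "0 < e \<Longrightarrow> \<exists>N. \<forall>n\<ge>N. gap_ratio k n < e"
  unfolding gap_ratio_def by (rule flat)

lemma glued_higher_deriv_tendsto_0: "((deriv ^^ Suc k) glued \<longlongrightarrow> 0) (at w)"
proof (rule tendstoI)
  fix e :: real
  assume "0 < e"
  obtain M where M: "M \<ge> 0"
    and bound: "\<And>n y. \<bar>(deriv ^^ Suc k) (local_model n) y\<bar> \<le> M * (gap_ratio k (n - 1) + gap_ratio k n)"
    using higher_deriv_local_model_bound[of k] by blast
  define e' where "e' = e / (2 * (M + 1))"
  have "0 < e'"
    using \<open>0 < e\<close> M by (simp add: e'_def)
  then obtain N where N: "\<And>n. N \<le> n \<Longrightarrow> gap_ratio k n < e'"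
    using gap_ratio_eventually_less by blast
  have "dist ((deriv ^^ Suc k) glued y) 0 < e" if "y \<noteq> w" "dist y w < w - K (N + 1)" for y
  proof -
    let ?n = "knot_index (w - \<bar>y - w\<bar>)"
    have "N + 1 \<le> ?n"
      using that by (intro knot_index_ge) (auto simp: dist_real_def)
    then have "gap_ratio k (?n - 1) < e'" "gap_ratio k ?n < e'"
      using N by simp_all
    then have "gap_ratio k (?n - 1) + gap_ratio k ?n < 2 * e'"
      by simp
    have "\<bar>(deriv ^^ Suc k) glued y\<bar> \<le> M * (gap_ratio k (?n - 1) + gap_ratio k ?n)"
      unfolding abs_higher_deriv_glued[OF that(1)] by (rule bound)
    also have "\<dots> \<le> M * (2 * e')"
      using M \<open>gap_ratio k (?n - 1) + gap_ratio k ?n < 2 * e'\<close> by (intro mult_left_mono) auto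
    also have "\<dots> < e"
      using \<open>0 < e\<close> M by (simp add: e'_def field_simps)
    finally show ?thesis
      by (simp add: dist_real_def)
  qed
  moreover have "0 < w - K (N + 1)"
    using K_below[of "N + 1"] by simp
  ultimately show "\<forall>\<^sub>F y in at w. dist ((deriv ^^ Suc k) glued y) 0 < e"
    unfolding eventually_at by blast
qed

lemma glued_isCont_w: "isCont glued w"
  unfolding isCont_def glued_w
proof (rule tendstoI)
  fix e :: real
  assume "0 < e"
  then obtain N where N: "z - V N < e"
    using V_approx by blast
  have "dist (glued y) z < e" if "y \<noteq> w" "dist y w < w - K N" for y
  proof -
    have "N \<le> knot_index (w - \<bar>y - w\<bar>)"
      using that by (intro knot_index_ge) (auto simp: dist_real_def)
    then have "V N \<le> V (knot_index (w - \<bar>y - w\<bar>))"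
      by simp
    also have "\<dots> \<le> left_map (w - \<bar>y - w\<bar>)"
      using left_map_bounds(1)[of "w - \<bar>y - w\<bar>"] that(1) by simp
    finally show ?thesis
      using abs_glued_diff_z[OF that(1)] N by (simp add: dist_real_def)
  qed
  moreover have "0 < w - K N"
    using K_below[of N] by simp
  ultimately show "\<forall>\<^sub>F y in at w. dist (glued y) z < e"
    unfolding eventually_at by blast
qed

lemma smooth_glued: "smooth glued"
  using glued_higher_deriv_differentiable glued_isCont_w glued_higher_deriv_tendsto_0
  by (rule smooth_if_flat_at)

lemma glued_at_knot: "glued (K n) = V n"
  using K_below[of n] K_step[of n] left_map_eq_piece[of "K n" n] by (simp add: glued_def piece_left)

lemma glued_at_mirrored_knot: "glued (2 * w - K n) = 2 * z - V n"
  using K_below[of n] glued_at_knot[of n] by (simp add: glued_def)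

lemma surj_glued: "surj glued"
proof -
  have "\<exists>x. glued x = c" for c
  proof -
    obtain m n where "V m < c" "V n < 2 * z - c"
      using V_unbounded by meson
    moreover have "K m \<le> 2 * w - K n"
      using K_below[of m] K_below[of n] by simp
    ultimately show ?thesis
      using IVT'[of glued "K m" c "2 * w - K n", OF _ _ _ smooth_continuous_on[OF smooth_glued]]
      by (force simp: glued_at_knot glued_at_mirrored_knot)
  qed
  then show ?thesis
    by (metis surjI)
qed

lemma bij_glued: "bij glued"
  using glued_strict_mono surj_glued by (simp add: bij_def strict_mono_imp_inj_on)

end

section \<open>Existence of rational knots\<close>

lemma rational_approximants:
  fixes c :: real and \<delta> :: "nat \<Rightarrow> real"
  assumes "\<And>j. 0 < \<delta> j"
  obtains q where "\<And>j. q j \<in> \<rat>" "\<And>j. c - \<delta> j < q j" "\<And>j. q j < c - \<delta> j / 2"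
proof -
  have "\<exists>q. q \<in> \<rat> \<and> c - \<delta> j < q \<and> q < c - \<delta> j / 2" for j
    using Rats_dense_in_real[of "c - \<delta> j" "c - \<delta> j / 2"] assms[of j] by auto
  then show ?thesis
    using that by metis
qed

definition int_extension :: "(nat \<Rightarrow> real) \<Rightarrow> int \<Rightarrow> real" where
  "int_extension q n = (if n < 0 then q 0 + of_int n else q (nat n))"

lemma int_extension_of_nat [simp]: "int_extension q (int j) = q j"
  by (simp add: int_extension_def)

lemma int_extension_step:
  assumes "\<And>j. q j < q (Suc j)"
  shows "int_extension q n < int_extension q (n + 1)"
  using assms[of 0] assms[of "nat n"]
  by (auto simp: int_extension_def nat_add_distrib)

lemma int_extension_rational: "(\<And>j. q j \<in> \<rat>) \<Longrightarrow> int_extension q n \<in> \<rat>"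
  by (simp add: int_extension_def)

lemma int_extension_below:
  assumes "\<And>j. q j < b"
  shows "int_extension q n < b"
proof (cases "n < 0")
  case True
  then have "q 0 + of_int n < q 0"
    by simp
  with True show ?thesis
    using assms[of 0] by (simp add: int_extension_def)
qed (simp add: assms int_extension_def)

lemma int_extension_unbounded: "\<exists>n. int_extension q n < c"
proof -
  define n where "n = min (-1) (\<lfloor>c - q 0\<rfloor> - 1)"
  have "int_extension q n < c"
    unfolding int_extension_def n_def by (auto simp: min_def) linarith+
  then show ?thesis ..
qed

text \<open>Knots in \<open>(w - 4\<^sup>-\<^sup>j, w - 4\<^sup>-\<^sup>j / 2)\<close> have gaps larger than \<open>4\<^sup>-\<^sup>(\<^sup>j\<^sup>+\<^sup>1\<^sup>)\<close>; value gaps below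
  \<open>flat_gap j\<close> then bound the \<open>(k + 1)\<close>-th gap ratio by \<open>2\<^sup>-\<^sup>j\<close> once \<open>k < j\<close>.\<close>

definition flat_gap :: "nat \<Rightarrow> real" where
  "flat_gap j = (1/2) ^ j * ((1/4) ^ Suc j) ^ j"

lemma flat_gap_pos: "0 < flat_gap j"
  by (simp add: flat_gap_def)

lemma flat_gap_le: "flat_gap j \<le> (1/2) ^ j"
  unfolding flat_gap_def by (intro mult_right_le_one_le power_le_one) simp_all

lemma flat_gap_Suc: "flat_gap (Suc j) \<le> flat_gap j / 2"
proof -
  define m :: real where "m = (1/4) ^ Suc j"
  have m: "0 < m" "m \<le> 1"
    unfolding m_def by (simp, intro power_le_one) simp_all
  have "(m / 4) ^ Suc j \<le> m ^ Suc j"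
    using m by (intro power_mono) simp_all
  also have "\<dots> \<le> m ^ j"
    using m by (simp add: mult_left_le_one_le)
  finally have "(1/2) ^ Suc j * (m / 4) ^ Suc j \<le> (1/2) ^ Suc j * m ^ j"
    by (rule mult_left_mono) simp
  then show ?thesis
    by (simp add: flat_gap_def m_def)
qed

lemma flat_gap_ratio_le:
  assumes "Suc k \<le> j" "0 < d" "d < flat_gap j" "(1/4) ^ Suc j < g"
  shows "d / g ^ Suc k \<le> (1/2) ^ j"
proof -
  define m :: real where "m = (1/4) ^ Suc j"
  have m: "0 < m" "m \<le> 1"
    unfolding m_def by (simp, intro power_le_one) simp_all
  have "d / g ^ Suc k \<le> flat_gap j / m ^ Suc k"
    using assms(2-4) m by (intro frac_le power_mono) (auto simp: m_def)
  also have "\<dots> = (1/2) ^ j * m ^ (j - Suc k)"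
    using assms(1) m by (simp add: flat_gap_def m_def power_diff)
  also have "\<dots> \<le> (1/2) ^ j"
    using m by (intro mult_right_le_one_le power_le_one) simp_all
  finally show ?thesis .
qed

lemma flat_gap_ratio_eventually_less:
  assumes Kq_gap: "\<And>j. (1/4) ^ Suc j < Kq (Suc j) - Kq j"
    and Vq_step: "\<And>j. Vq j < Vq (Suc j)" and Vq_gap: "\<And>j. Vq (Suc j) - Vq j < flat_gap j"
    and "0 < e"
  shows "\<exists>N. \<forall>j\<ge>N. (Vq (Suc j) - Vq j) / (Kq (Suc j) - Kq j) ^ Suc k < e"
proof -
  obtain j0 where j0: "(1/2::real) ^ j0 < e"
    using real_arch_pow_inv[OF \<open>0 < e\<close>, of "1/2"] by auto
  have "(Vq (Suc j) - Vq j) / (Kq (Suc j) - Kq j) ^ Suc k < e" if "max j0 (Suc k) \<le> j" for j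
  proof -
    have "(Vq (Suc j) - Vq j) / (Kq (Suc j) - Kq j) ^ Suc k \<le> (1/2) ^ j"
      using that Vq_step[of j] Vq_gap[of j] Kq_gap[of j] by (intro flat_gap_ratio_le) auto
    also have "\<dots> \<le> (1/2) ^ j0"
      using that by (intro power_decreasing) auto
    finally show ?thesis
      using j0 by linarith
  qed
  then show ?thesis
    by blast
qed

lemma int_extension_Suc [simp]: "int_extension q (int j + 1) = q (Suc j)"
  by (metis int_extension_of_nat of_nat_Suc add.commute)

lemma int_extension_eventually:
  assumes "\<forall>j\<ge>N. P (q j) (q (Suc j)) (r j) (r (Suc j))"
  shows "\<forall>n\<ge>int N. P (int_extension q n) (int_extension q (n + 1))
                     (int_extension r n) (int_extension r (n + 1))"
proof (intro allI impI)
  fix n :: int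
  assume "int N \<le> n"
  then have "n = int (nat n)" "N \<le> nat n"
    using nat_mono[of "int N" n] by simp_all
  then show "P (int_extension q n) (int_extension q (n + 1)) (int_extension r n) (int_extension r (n + 1))"
    using assms int_extension_Suc[of _ "nat n"] int_extension_of_nat[of _ "nat n"] by metis
qed

lemma rational_knots_exist: "\<exists>K V. rational_knots K V w z"
proof -
  obtain Kq where Kq: "\<And>j. Kq j \<in> \<rat>" "\<And>j. w - (1/4) ^ j < Kq j" "\<And>j. Kq j < w - (1/4) ^ j / 2"
    using rational_approximants[of "\<lambda>j. (1/4::real) ^ j" w] by auto
  obtain Vq where Vq: "\<And>j. Vq j \<in> \<rat>" "\<And>j. z - flat_gap j < Vq j" "\<And>j. Vq j < z - flat_gap j / 2"
    using rational_approximants[of flat_gap z] flat_gap_pos by auto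
  have quarter_pos: "0 < (1/4::real) ^ j" for j
    by simp
  have Kq_gap: "(1/4) ^ Suc j < Kq (Suc j) - Kq j" for j
    using Kq(2)[of "Suc j"] Kq(3)[of j] by simp
  have Kq_step: "Kq j < Kq (Suc j)" for j
    using Kq_gap[of j] quarter_pos[of "Suc j"] by linarith
  have Kq_below: "Kq j < w" for j
    using Kq(3)[of j] quarter_pos[of j] by linarith
  have Vq_step: "Vq j < Vq (Suc j)" for j
    using Vq(3)[of j] flat_gap_Suc[of j] Vq(2)[of "Suc j"] by linarith
  have Vq_below: "Vq j < z" for j
    using Vq(3)[of j] flat_gap_pos[of j] by linarith
  have Vq_gap: "Vq (Suc j) - Vq j < flat_gap j" for j
    using Vq(2)[of j] Vq_below[of "Suc j"] by linarith
  have "rational_knots (int_extension Kq) (int_extension Vq) w z"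
  proof
    fix n :: int and c :: real
    show "int_extension Kq n < int_extension Kq (n + 1)" "int_extension Vq n < int_extension Vq (n + 1)"
      using Kq_step Vq_step by (simp_all add: int_extension_step)
    show "int_extension Kq n < w" "int_extension Vq n < z"
      using Kq_below Vq_below by (simp_all add: int_extension_below)
    show "int_extension Kq n \<in> \<rat>" "int_extension Vq n \<in> \<rat>"
      using Kq(1) Vq(1) by (simp_all add: int_extension_rational)
    show "\<exists>n. int_extension Kq n < c" "\<exists>n. int_extension Vq n < c"
      by (simp_all add: int_extension_unbounded)
  next
    fix e :: real
    assume "0 < e"
    then obtain j where j: "(1/2::real) ^ j < e"
      using real_arch_pow_inv[of e "1/2"] by auto
    moreover have "(1/4::real) ^ j \<le> (1/2) ^ j"
      by (intro power_mono) simp_all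
    ultimately have "w - int_extension Kq (int j) < e" "z - int_extension Vq (int j) < e"
      using Kq(2)[of j] Vq(2)[of j] flat_gap_le[of j] by simp_all
    then show "\<exists>n. w - int_extension Kq n < e" "\<exists>n. z - int_extension Vq n < e"
      by blast+
  next
    fix k :: nat and e :: real
    assume "0 < e"
    then obtain N where "\<forall>j\<ge>N. (Vq (Suc j) - Vq j) / (Kq (Suc j) - Kq j) ^ Suc k < e"
      using flat_gap_ratio_eventually_less[OF Kq_gap Vq_step Vq_gap] by blast
    from int_extension_eventually[where P = "\<lambda>k0 k1 v0 v1. (v1 - v0) / (k1 - k0) ^ Suc k < e", OF this]
    show "\<exists>N. \<forall>n\<ge>N. (int_extension Vq (n + 1) - int_extension Vq n)
                       / (int_extension Kq (n + 1) - int_extension Kq n) ^ Suc k < e"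
      by blast
  qed
  then show ?thesis
    by blast
qed

theorem mainTheorem8:
  fixes w z :: real
  shows "\<exists>t :: real \<Rightarrow> real. smooth t \<and> strict_mono t \<and> bij t \<and> t w = z \<and>
           (\<forall>x < w. simF_star (t x) x)"
proof -
  obtain K V where "rational_knots K V w z"
    using rational_knots_exist by blast
  then interpret rational_knots K V w z .
  show ?thesis
    using smooth_glued glued_strict_mono bij_glued glued_w glued_simF_star by blast
qed

end
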